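(* Let $A$ be a symmetric adornment with base $[x,y]$. Then $A$ is slender if and only if $A$ is a union of sets of the form $B(x,r)\cap B(y,s)$ (for some family of radius pairs $(r,s)$), where $B(c,\rho)$ denotes the closed disk of radius $\rho$ centered at $c$.
   Context: An adornment is a compact simply connected region $S\subset\mathbb{R}^2$ together with a segment $[x,y]$, $x\neq y$, whose endpoints lie on the boundary of $S$ and with $[x,y]\subseteq S$ (the base). The boundary of $S$ consists of two arcs from $x$ to $y$ (the sides). The adornment is slender if, for a point $p$ moving along either side from $x$ to $y$, $\|p-x\|$ is nondecreasing and $\|p-y\|$ is nonincreasing. It is symmetric if invariant under reflection in the line through $x,y$. *)

theory Defs
  imports "HOL-Analysis.Analysis"
begin

text \<open>The plane is modelled as the type complex (Euclidean R^2).\<close>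

definition side :: "complex set \<Rightarrow> complex \<Rightarrow> complex \<Rightarrow> (real \<Rightarrow> complex) \<Rightarrow> bool" where
  "side S x y g \<longleftrightarrow> arc g \<and> pathstart g = x \<and> pathfinish g = y \<and> path_image g \<subseteq> frontier S"

definition adornment :: "complex set \<Rightarrow> complex \<Rightarrow> complex \<Rightarrow> bool" where
  "adornment S x y \<longleftrightarrow>
     compact S \<and> simply_connected S \<and> connected (interior S) \<and> S = closure (interior S) \<and>
     x \<noteq> y \<and> x \<in> frontier S \<and> y \<in> frontier S \<and> closed_segment x y \<subseteq> S \<and>
     (\<exists>g1 g2. side S x y g1 \<and> side S x y g2 \<and>
        path_image g1 \<inter> path_image g2 = {x, y} \<and>
        frontier S = path_image g1 \<union> path_image g2)"

definition slender :: "complex set \<Rightarrow> complex \<Rightarrow> complex \<Rightarrow> bool" where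
  "slender S x y \<longleftrightarrow>
     (\<forall>g. side S x y g \<longrightarrow>
        (\<forall>s\<in>{0..1}. \<forall>t\<in>{0..1}. s \<le> t \<longrightarrow>
            dist (g s) x \<le> dist (g t) x \<and> dist (g t) y \<le> dist (g s) y))"

definition refl_line :: "complex \<Rightarrow> complex \<Rightarrow> complex \<Rightarrow> complex" where
  "refl_line x y z = x + (y - x) * cnj ((z - x) / (y - x))"

definition symmetric_adornment :: "complex set \<Rightarrow> complex \<Rightarrow> complex \<Rightarrow> bool" where
  "symmetric_adornment S x y \<longleftrightarrow> adornment S x y \<and> refl_line x y ` S = S"

end

theory Submission
  imports Defs
begin

text \<open>Call S lens-closed if, with every point z, it contains every w with
  dist w x \<le> dist z x and dist w y \<le> dist z y; these are exactly the unions of lenses.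
  Symmetry forces the reflection in the line xy to exchange the two sides, so each side minus its
  endpoints lies in one open half-plane, and a point of a side is determined by its distances to
  x and y.

  If S is lens-closed, no boundary point is strictly dominated by a point of S. Along a side the
  distance pairs therefore form an antichain, and by connectedness all points before a given
  point p lie in the closed quadrant "closer to x, farther from y" of p: S is slender.

  If S is slender, a boundary point f strictly dominates no boundary point (monotonicity on the
  side of f, reflection for the other side). The open lens of f meets the base, since f is off
  the line, and avoids the boundary, so it lies in S, and so does its closure. Finally every
  point of S is dominated by the boundary point reached by moving perpendicularly away from the
  line xy.\<close>

definition base_coord :: "complex \<Rightarrow> complex \<Rightarrow> complex \<Rightarrow> complex" where
  "base_coord x y z = (z - x) / (y - x)"

lemma base_coord_eq_iff: "x \<noteq> y \<Longrightarrow> base_coord x y z = base_coord x y w \<longleftrightarrow> z = w"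
  by (auto simp: base_coord_def)

lemma base_coord_midpoint: "x \<noteq> y \<Longrightarrow> base_coord x y (midpoint x y) = 1 / 2"
  by (simp add: base_coord_def midpoint_def scaleR_conv_of_real field_simps)

lemma dist_x_base_coord: "x \<noteq> y \<Longrightarrow> dist z x = cmod (y - x) * cmod (base_coord x y z)"
  by (simp add: base_coord_def dist_norm norm_divide)

lemma dist_y_base_coord: "x \<noteq> y \<Longrightarrow> dist z y = cmod (y - x) * cmod (base_coord x y z - 1)"
proof -
  assume "x \<noteq> y"
  then have "z - y = (y - x) * (base_coord x y z - 1)"
    by (simp add: base_coord_def field_simps)
  then show ?thesis
    by (simp add: dist_norm norm_mult)
qed

lemma base_coord_refl_line: "x \<noteq> y \<Longrightarrow> base_coord x y (refl_line x y z) = cnj (base_coord x y z)"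
  by (simp add: base_coord_def refl_line_def)

lemma refl_line_refl_line [simp]: "x \<noteq> y \<Longrightarrow> refl_line x y (refl_line x y z) = z"
  by (simp add: refl_line_def)

lemma refl_line_x [simp]: "refl_line x y x = x"
  and refl_line_y [simp]: "refl_line x y y = y"
  by (simp_all add: refl_line_def)

lemma refl_line_eq_x_iff [simp]: "x \<noteq> y \<Longrightarrow> refl_line x y z = x \<longleftrightarrow> z = x"
  and refl_line_eq_y_iff [simp]: "x \<noteq> y \<Longrightarrow> refl_line x y z = y \<longleftrightarrow> z = y"
  by (metis refl_line_refl_line refl_line_x refl_line_y)+

lemma inj_refl_line: "x \<noteq> y \<Longrightarrow> inj (refl_line x y)"
  by (metis injI refl_line_refl_line)

lemma refl_line_image_Diff_endpoints:
  "x \<noteq> y \<Longrightarrow> refl_line x y ` (A - {x, y}) = refl_line x y ` A - {x, y}"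
  by (simp add: image_set_diff inj_refl_line)

lemma refl_line_eq_self_iff:
  assumes "x \<noteq> y"
  shows "refl_line x y z = z \<longleftrightarrow> Im (base_coord x y z) = 0"
proof -
  have "refl_line x y z = z \<longleftrightarrow> cnj (base_coord x y z) = base_coord x y z"
    using base_coord_eq_iff[OF assms] base_coord_refl_line[OF assms] by metis
  also have "\<dots> \<longleftrightarrow> Im (base_coord x y z) = 0"
    by (simp add: complex_eq_iff)
  finally show ?thesis .
qed

lemma dist_refl_line [simp]:
  assumes "x \<noteq> y"
  shows "dist (refl_line x y z) (refl_line x y w) = dist z w"
proof -
  have "refl_line x y z - refl_line x y w = (y - x) * cnj ((z - w) / (y - x))"
    by (simp add: refl_line_def algebra_simps diff_divide_distrib)
  moreover have "cmod (cnj ((z - w) / (y - x))) = cmod (z - w) / cmod (y - x)"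
    by (simp only: complex_mod_cnj norm_divide)
  ultimately show ?thesis
    using assms unfolding dist_norm by (simp only: norm_mult) simp
qed

lemma dist_refl_line_x [simp]: "x \<noteq> y \<Longrightarrow> dist (refl_line x y z) x = dist z x"
  and dist_refl_line_y [simp]: "x \<noteq> y \<Longrightarrow> dist (refl_line x y z) y = dist z y"
  by (metis dist_refl_line refl_line_x refl_line_y)+

lemma continuous_on_refl_line: "x \<noteq> y \<Longrightarrow> continuous_on A (refl_line x y)"
  unfolding refl_line_def by (intro continuous_intros) auto

lemma eq_or_cnj_if_cmod_eq:
  fixes a b :: complex
  assumes "cmod b = cmod a" and "cmod (b - 1) = cmod (a - 1)"
  shows "b = a \<or> b = cnj a"
proof -
  have sq: "(Re b)\<^sup>2 + (Im b)\<^sup>2 = (Re a)\<^sup>2 + (Im a)\<^sup>2"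
    using assms(1) by (metis cmod_power2)
  have "(Re b - 1)\<^sup>2 + (Im b)\<^sup>2 = (Re a - 1)\<^sup>2 + (Im a)\<^sup>2"
    using arg_cong[OF assms(2), of power2] by (simp add: cmod_power2)
  with sq have re: "Re b = Re a"
    by (simp add: power2_eq_square algebra_simps)
  with sq have "Im b = Im a \<or> Im b = - Im a"
    by (simp add: power2_eq_iff)
  with re show ?thesis
    by (auto simp: complex_eq_iff)
qed

lemma eq_or_refl_line_if_dists_eq:
  assumes xy: "x \<noteq> y" and "dist w x = dist z x" and "dist w y = dist z y"
  shows "w = z \<or> w = refl_line x y z"
proof -
  have "cmod (base_coord x y w) = cmod (base_coord x y z)"
    and "cmod (base_coord x y w - 1) = cmod (base_coord x y z - 1)"
    using assms by (simp_all add: dist_x_base_coord dist_y_base_coord)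
  then have "base_coord x y w = base_coord x y z
      \<or> base_coord x y w = base_coord x y (refl_line x y z)"
    using eq_or_cnj_if_cmod_eq base_coord_refl_line[OF xy] by metis
  then show ?thesis
    using base_coord_eq_iff[OF xy] by blast
qed

lemma cmod_add_cmod_diff_one_gt:
  fixes a :: complex
  assumes "Im a \<noteq> 0"
  shows "1 < cmod a + cmod (a - 1)"
proof -
  have "\<bar>Re a\<bar> = sqrt ((Re a)\<^sup>2)" by simp
  also have "\<dots> < sqrt ((Re a)\<^sup>2 + (Im a)\<^sup>2)"
    using assms by (intro real_sqrt_less_mono) simp
  finally have "\<bar>Re a\<bar> < cmod a"
    by (simp add: cmod_def)
  moreover have "\<bar>Re a - 1\<bar> \<le> cmod (a - 1)"
    using abs_Re_le_cmod[of "a - 1"] by simp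
  ultimately show ?thesis by linarith
qed

lemma dist_lt_dist_add_dist_off_line:
  assumes "x \<noteq> y" and "Im (base_coord x y z) \<noteq> 0"
  shows "dist x y < dist z x + dist z y"
proof -
  have "cmod (y - x) * 1 < cmod (y - x) * (cmod (base_coord x y z) + cmod (base_coord x y z - 1))"
    using assms cmod_add_cmod_diff_one_gt by (intro mult_strict_left_mono) auto
  moreover have "dist z x + dist z y
      = cmod (y - x) * (cmod (base_coord x y z) + cmod (base_coord x y z - 1))"
    using dist_x_base_coord[OF assms(1)] dist_y_base_coord[OF assms(1)] by (simp add: distrib_left)
  moreover have "dist x y = cmod (y - x)"
    by (simp add: dist_norm norm_minus_commute)
  ultimately show ?thesis by simp
qed

lemma cmod_le_if_Re_eq:
  fixes a b :: complex
  assumes "Re a = Re b" and "\<bar>Im a\<bar> \<le> \<bar>Im b\<bar>"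
  shows "cmod a \<le> cmod b"
proof -
  have "(Im a)\<^sup>2 \<le> (Im b)\<^sup>2"
    using assms(2) by (metis abs_ge_zero power2_abs power_mono)
  then show ?thesis
    unfolding cmod_def using assms(1) by (intro real_sqrt_le_mono) simp
qed

lemma dists_le_if_farther_from_line:
  assumes "x \<noteq> y" and "Re (base_coord x y z) = Re (base_coord x y w)"
    and "\<bar>Im (base_coord x y z)\<bar> \<le> \<bar>Im (base_coord x y w)\<bar>"
  shows "dist z x \<le> dist w x \<and> dist z y \<le> dist w y"
proof -
  have "cmod (base_coord x y z) \<le> cmod (base_coord x y w)"
    and "cmod (base_coord x y z - 1) \<le> cmod (base_coord x y w - 1)"
    using assms(2,3) by (auto intro: cmod_le_if_Re_eq)
  then show ?thesis
    using assms(1) by (simp add: dist_x_base_coord dist_y_base_coord mult_left_mono)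
qed

text \<open>Walk from z away from the base line, perpendicularly to it, until leaving S.\<close>
lemma frontier_point_dominating:
  fixes S :: "complex set"
  assumes "bounded S" and "z \<in> S" and xy: "x \<noteq> y"
  obtains f where "f \<in> frontier S" and "dist z x \<le> dist f x" and "dist z y \<le> dist f y"
proof -
  define e where "e = (if Im (base_coord x y z) \<ge> 0 then \<i> else - \<i>)"
  define r where "r \<tau> = z + of_real \<tau> * (y - x) * e" for \<tau> :: real
  have dominated: "dist z x \<le> dist (r \<tau>) x \<and> dist z y \<le> dist (r \<tau>) y" if "\<tau> \<ge> 0" for \<tau>
  proof (rule dists_le_if_farther_from_line[OF xy])
    have "base_coord x y (r \<tau>) = base_coord x y z + of_real \<tau> * e"
      using xy by (simp add: r_def base_coord_def field_simps)
    then show "Re (base_coord x y z) = Re (base_coord x y (r \<tau>))"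
      and "\<bar>Im (base_coord x y z)\<bar> \<le> \<bar>Im (base_coord x y (r \<tau>))\<bar>"
      using that by (auto simp: e_def)
  qed
  obtain B where B: "\<And>w. w \<in> S \<Longrightarrow> cmod w \<le> B"
    using assms(1) bounded_iff by blast
  define T where "T = (B + cmod z + 1) / cmod (y - x)"
  have "0 \<le> B + cmod z + 1"
    using B[OF assms(2)] norm_ge_zero[of z] by linarith
  then have T: "T \<ge> 0"
    by (simp add: T_def)
  then have "cmod (r T - z) = T * cmod (y - x)"
    by (simp add: r_def e_def norm_mult)
  also have "\<dots> = B + cmod z + 1"
    using xy by (simp add: T_def)
  finally have "r T \<notin> S"
    using B norm_triangle_ineq4[of "r T" z] by force
  moreover have "z \<in> r ` {0..T}" and "r T \<in> r ` {0..T}"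
    using T by (auto simp: r_def intro!: image_eqI[of z r 0])
  moreover have "connected (r ` {0..T})"
    unfolding r_def by (intro connected_continuous_image continuous_intros) auto
  ultimately obtain f where "f \<in> r ` {0..T}" and "f \<in> frontier S"
    using connected_Int_frontier[of "r ` {0..T}" S] assms(2) by blast
  then show thesis
    using dominated that by auto
qed

definition lens_closed :: "'a::metric_space set \<Rightarrow> 'a \<Rightarrow> 'a \<Rightarrow> bool" where
  "lens_closed S x y \<longleftrightarrow>
     (\<forall>z\<in>S. \<forall>w. dist w x \<le> dist z x \<longrightarrow> dist w y \<le> dist z y \<longrightarrow> w \<in> S)"

lemma union_of_lenses_iff_lens_closed:
  "(\<exists>R :: (real \<times> real) set. S = (\<Union>(r, s)\<in>R. cball x r \<inter> cball y s)) \<longleftrightarrow> lens_closed S x y"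
proof
  assume "\<exists>R :: (real \<times> real) set. S = (\<Union>(r, s)\<in>R. cball x r \<inter> cball y s)"
  then obtain R :: "(real \<times> real) set" where "S = (\<Union>(r, s)\<in>R. cball x r \<inter> cball y s)" ..
  then show "lens_closed S x y"
    unfolding lens_closed_def by (fastforce simp: dist_commute)
next
  assume "lens_closed S x y"
  then have "S = (\<Union>(r, s)\<in>(\<lambda>z. (dist z x, dist z y)) ` S. cball x r \<inter> cball y s)"
    unfolding lens_closed_def by (auto simp: dist_commute)
  then show "\<exists>R :: (real \<times> real) set. S = (\<Union>(r, s)\<in>R. cball x r \<inter> cball y s)" ..
qed

lemma lens_closed_commute: "lens_closed S x y \<longleftrightarrow> lens_closed S y x"
  by (auto simp: lens_closed_def)

lemma lens_closed_frontier_undominated: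
  assumes "lens_closed S x y" and "f \<in> frontier S" and "z \<in> S"
  shows "\<not> (dist f x < dist z x \<and> dist f y < dist z y)"
proof
  assume "dist f x < dist z x \<and> dist f y < dist z y"
  then have "f \<in> ball x (dist z x) \<inter> ball y (dist z y)"
    by (simp add: dist_commute)
  moreover have "ball x (dist z x) \<inter> ball y (dist z y) \<subseteq> S"
    using assms(1,3) unfolding lens_closed_def by (auto simp: dist_commute)
  ultimately have "f \<in> interior S"
    by (meson interior_maximal open_Int open_ball in_mono)
  then show False
    using assms(2) by (simp add: frontier_def)
qed

lemma lens_closed_dist_le:
  assumes "lens_closed S x y" and "x \<in> frontier S" and "z \<in> S"
  shows "dist z y \<le> dist x y"
  using lens_closed_frontier_undominated[OF assms] by (cases "z = x") auto

lemma lens_closed_frontier_comparable: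
  assumes "lens_closed S x y" and "closed S" and "f \<in> frontier S" and "w \<in> frontier S"
  shows "(dist w x \<le> dist f x \<and> dist f y \<le> dist w y) \<or> (dist f x \<le> dist w x \<and> dist w y \<le> dist f y)"
  using lens_closed_frontier_undominated[OF assms(1,3)]
    lens_closed_frontier_undominated[OF assms(1,4)] assms(2-4) frontier_subset_closed
  by fastforce

lemma closed_segment_meets_lens:
  fixes x y :: "'a::euclidean_space"
  assumes "0 < r" and "0 < s" and "dist x y < r + s"
  shows "closed_segment x y \<inter> ball x r \<inter> ball y s \<noteq> {}"
proof -
  have "closed_segment x y \<subseteq> ball x r \<union> ball y s"
  proof
    fix w assume "w \<in> closed_segment x y"
    then have "dist x w + dist w y = dist x y"
      by (simp add: between flip: between_mem_segment)
    then show "w \<in> ball x r \<union> ball y s"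
      using assms(3) by (auto simp: dist_commute)
  qed
  moreover have "x \<in> ball x r \<inter> closed_segment x y" and "y \<in> ball y s \<inter> closed_segment x y"
    using assms(1,2) by auto
  ultimately show ?thesis
    using connectedD[OF connected_segment, of "ball x r" "ball y s" x y] by blast
qed

lemma closed_lens_subset_if_open_lens_subset:
  fixes x y :: "'a::euclidean_space"
  assumes "closed S" and "ball x r \<inter> ball y s \<noteq> {}" and "ball x r \<inter> ball y s \<subseteq> S"
  shows "cball x r \<inter> cball y s \<subseteq> S"
proof -
  let ?K = "cball x r \<inter> cball y s"
  have int: "interior ?K = ball x r \<inter> ball y s"
    by (simp add: interior_Int)
  have "?K = closure (interior ?K)"
    using convex_closure_interior[of ?K] int assms(2)
    by (simp add: convex_Int closed_Int closure_closed)
  also have "\<dots> \<subseteq> closure S"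
    using int assms(3) by (simp add: closure_mono)
  finally show ?thesis
    using assms(1) by (simp add: closure_closed)
qed

lemma connected_nonzero_same_sign:
  fixes f :: "'a::topological_space \<Rightarrow> real"
  assumes "connected C" and "continuous_on C f" and "\<And>z. z \<in> C \<Longrightarrow> f z \<noteq> 0"
    and "z \<in> C" and "w \<in> C"
  shows "0 < f z * f w"
proof (rule ccontr)
  assume "\<not> 0 < f z * f w"
  then have "0 \<in> closed_segment (f z) (f w)"
    by (auto simp: closed_segment_eq_real_ivl zero_less_mult_iff not_less mult_le_0_iff)
  moreover have "connected (f ` C)"
    using assms(2,1) by (rule connected_continuous_image)
  ultimately have "0 \<in> f ` C"
    using assms(4,5) connected_iff_interval[of "f ` C"]
    by (auto simp: closed_segment_eq_real_ivl split: if_splits)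
  then show False
    using assms(3) by auto
qed

lemma unit_interval_involution_eq_id:
  fixes \<phi> :: "real \<Rightarrow> real"
  assumes cont: "continuous_on {0..1} \<phi>" and maps: "\<And>t. t \<in> {0..1} \<Longrightarrow> \<phi> t \<in> {0..1}"
    and inv: "\<And>t. t \<in> {0..1} \<Longrightarrow> \<phi> (\<phi> t) = t" and "\<phi> 0 = 0"
    and t: "t \<in> {0..1}"
  shows "\<phi> t = t"
proof -
  have "inj_on \<phi> {0..1}"
    by (metis inv inj_onI)
  then have "strict_mono_on {0..1} \<phi> \<or> strict_antimono_on {0..1} \<phi>"
    using injective_eq_monotone_map[of "{0..1}" \<phi>] cont by simp
  moreover have "\<not> strict_antimono_on {0..1} \<phi>"
  proof
    assume "strict_antimono_on {0..1} \<phi>"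
    then have "\<phi> 1 < \<phi> 0"
      using monotone_onD[of "{0..1}" "(<)" "(>)" \<phi> 0 1] by simp
    then show False
      using maps[of 1] \<open>\<phi> 0 = 0\<close> by simp
  qed
  ultimately have less: "\<phi> s < \<phi> s'" if "s \<in> {0..1}" "s' \<in> {0..1}" "s < s'" for s s'
    using monotone_onD[of "{0..1}" "(<)" "(<)" \<phi>] that by blast
  show ?thesis
  proof (rule ccontr)
    assume "\<phi> t \<noteq> t"
    then consider "\<phi> t < t" | "t < \<phi> t" by linarith
    then show False
    proof cases
      case 1
      then show False using less[OF maps[OF t] t] inv[OF t] by simp
    next
      case 2
      then show False using less[OF t maps[OF t]] inv[OF t] by simp
    qed
  qed
qed

lemma arc_fixed_by_involution:
  fixes g :: "real \<Rightarrow> 'a::t2_space"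
  assumes g: "arc g" and f_cont: "continuous_on (path_image g) f"
    and f_maps: "f ` path_image g \<subseteq> path_image g"
    and f_inv: "\<And>z. z \<in> path_image g \<Longrightarrow> f (f z) = z"
    and f_start: "f (pathstart g) = pathstart g"
    and z: "z \<in> path_image g"
  shows "f z = z"
proof -
  obtain h where "homeomorphism {0..1} (path_image g) g h"
    using homeomorphism_arc[OF g] by blast
  then have hg: "\<And>t. t \<in> {0..1} \<Longrightarrow> h (g t) = t"
    and gh: "\<And>w. w \<in> path_image g \<Longrightarrow> g (h w) = w"
    and h_maps: "h ` path_image g = {0..1}" and h_cont: "continuous_on (path_image g) h"
    unfolding homeomorphism_def by auto
  have g_maps: "g t \<in> path_image g" if "t \<in> {0..1}" for t
    using that by (simp add: path_image_def)
  define \<phi> where "\<phi> t = h (f (g t))" for t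
  have "\<phi> t = t" if "t \<in> {0..1}" for t
  proof (rule unit_interval_involution_eq_id[OF _ _ _ _ that])
    show "continuous_on {0..1} \<phi>"
      unfolding \<phi>_def
    proof (intro continuous_on_compose2[OF h_cont] continuous_on_compose2[OF f_cont])
      show "continuous_on {0..1} g"
        using arc_imp_path[OF g] by (simp add: path_def)
    qed (use g_maps f_maps in auto)
    show "\<phi> t \<in> {0..1}" if "t \<in> {0..1}" for t
      using that g_maps f_maps h_maps unfolding \<phi>_def by blast
    show "\<phi> (\<phi> t) = t" if "t \<in> {0..1}" for t
      using that g_maps f_maps by (simp add: \<phi>_def gh image_subset_iff f_inv hg)
    show "\<phi> 0 = 0"
      using f_start hg by (simp add: \<phi>_def pathstart_def)
  qed
  moreover obtain t where "t \<in> {0..1}" and "z = g t"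
    using z by (auto simp: path_image_def)
  ultimately show ?thesis
    using gh f_maps g_maps unfolding \<phi>_def by (metis image_subset_iff)
qed

lemma midpoint_in_path_image_on_line:
  assumes xy: "x \<noteq> y" and g: "path g" "pathstart g = x" "pathfinish g = y"
    and on_line: "\<And>z. z \<in> path_image g \<Longrightarrow> refl_line x y z = z"
  shows "midpoint x y \<in> path_image g"
proof -
  let ?u = "\<lambda>t. Re (base_coord x y (g t))"
  have "continuous_on {0..1} ?u"
    using g(1) xy unfolding path_def base_coord_def by (intro continuous_intros) auto
  moreover have "?u 0 = 0" and "?u 1 = 1"
    using g xy by (simp_all add: pathstart_def pathfinish_def base_coord_def)
  ultimately obtain t where t: "t \<in> {0..1}" and "?u t = 1 / 2"
    using IVT'[of ?u 0 "1 / 2" 1] by auto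
  moreover have "Im (base_coord x y (g t)) = 0"
    using on_line[of "g t"] t refl_line_eq_self_iff[OF xy] by (simp add: path_image_def)
  ultimately have "base_coord x y (g t) = base_coord x y (midpoint x y)"
    using xy by (simp add: base_coord_midpoint complex_eq_iff)
  then have "g t = midpoint x y"
    using base_coord_eq_iff[OF xy] by blast
  then show ?thesis
    using t unfolding path_image_def by (metis imageI)
qed

lemma side_path_image_Diff:
  assumes "side S x y g"
  shows "path_image g - {x, y} = g ` {0<..<1}"
proof -
  have inj: "inj_on g {0..1}" and "g 0 = x" and "g 1 = y"
    using assms by (auto simp: side_def arc_def pathstart_def pathfinish_def)
  have "g ` {0..1} - g ` {0, 1} = g ` ({0..1} - {0, 1})"
    using inj_on_image_set_diff[OF inj, of "{0..1}" "{0, 1}"] by auto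
  moreover have "{0..1} - {0, 1} = {0<..<1::real}"
    by auto
  ultimately show ?thesis
    using \<open>g 0 = x\<close> \<open>g 1 = y\<close> by (simp add: path_image_def)
qed

lemma connected_side_Diff:
  assumes "side S x y g"
  shows "connected (path_image g - {x, y})"
proof -
  have "continuous_on {0<..<1} g"
    using assms by (auto simp: side_def arc_def path_def elim: continuous_on_subset)
  then show ?thesis
    unfolding side_path_image_Diff[OF assms] by (rule connected_continuous_image) simp
qed

lemma slender_side_undominated:
  assumes "slender S x y" and "side S x y g" and "z \<in> path_image g" and "f \<in> path_image g"
  shows "\<not> (dist z x < dist f x \<and> dist z y < dist f y)"
proof -
  have mono: "dist (g s) x \<le> dist (g t) x \<and> dist (g t) y \<le> dist (g s) y"
    if "s \<in> {0..1}" and "t \<in> {0..1}" and "s \<le> t" for s t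
    using assms(1,2) that unfolding slender_def by blast
  obtain s t where s: "s \<in> {0..1}" and t: "t \<in> {0..1}" and "z = g s" and "f = g t"
    using assms(3,4) by (auto simp: path_image_def)
  consider "s \<le> t" | "t \<le> s"
    by linarith
  then show ?thesis
    using mono[OF s t] mono[OF t s] \<open>z = g s\<close> \<open>f = g t\<close> by cases auto
qed

lemma side_fixed_by_refl_line:
  assumes xy: "x \<noteq> y" and g: "side S x y g"
    and invariant: "refl_line x y ` (path_image g - {x, y}) \<subseteq> path_image g"
    and "z \<in> path_image g"
  shows "refl_line x y z = z"
proof (rule arc_fixed_by_involution[OF _ continuous_on_refl_line[OF xy]])
  show "arc g" and "refl_line x y (pathstart g) = pathstart g"
    using g by (simp_all add: side_def)
  have "x \<in> path_image g" and "y \<in> path_image g"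
    using g pathstart_in_path_image[of g] pathfinish_in_path_image[of g] by (auto simp: side_def)
  then show "refl_line x y ` path_image g \<subseteq> path_image g"
    using invariant by (force simp: image_subset_iff)
qed (use xy assms(4) in auto)

locale symmetric_adornment_sides =
  fixes S :: "complex set" and x y :: complex and g1 g2 :: "real \<Rightarrow> complex"
  assumes symmetric: "symmetric_adornment S x y"
    and side1: "side S x y g1" and side2: "side S x y g2"
    and sides_Int: "path_image g1 \<inter> path_image g2 = {x, y}"
    and frontier_eq: "frontier S = path_image g1 \<union> path_image g2"
begin

lemma swap_sides: "symmetric_adornment_sides S x y g2 g1"
  using symmetric side1 side2 sides_Int frontier_eq by unfold_locales auto

lemma x_ne_y: "x \<noteq> y"
  and compact: "compact S"
  and segment_subset: "closed_segment x y \<subseteq> S"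
  and refl_line_image: "refl_line x y ` S = S"
  and x_in_frontier: "x \<in> frontier S" and y_in_frontier: "y \<in> frontier S"
  using symmetric by (auto simp: symmetric_adornment_def adornment_def)

lemma frontier_subset: "frontier S \<subseteq> S"
  using compact by (simp add: compact_imp_closed frontier_subset_closed)

lemma refl_line_frontier: "refl_line x y ` frontier S = frontier S"
proof -
  have "homeomorphic_map euclidean euclidean (refl_line x y)"
    using x_ne_y by (intro homeomorphic_map_involution) (simp_all add: continuous_on_refl_line)
  from homeomorphic_map_frontier_of[OF this, of S] show ?thesis
    by (simp add: refl_line_image)
qed

lemma side_refl_line:
  assumes "side S x y g"
  shows "side S x y (refl_line x y \<circ> g)"
proof -
  have "path (refl_line x y \<circ> g)"
    using assms x_ne_y by (auto simp: side_def arc_imp_path continuous_on_refl_line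
        intro: path_continuous_image)
  moreover have "inj_on (refl_line x y \<circ> g) {0..1}"
    using assms inj_refl_line[OF x_ne_y] by (auto simp: side_def arc_def intro: comp_inj_on
        inj_on_subset)
  moreover have "path_image (refl_line x y \<circ> g) \<subseteq> frontier S"
    using assms refl_line_frontier by (auto simp: side_def path_image_compose)
  ultimately show ?thesis
    using assms by (simp add: side_def arc_def pathstart_compose pathfinish_compose)
qed

lemma side_Diff_subset_one_side:
  assumes "side S x y g"
  shows "path_image g - {x, y} \<subseteq> path_image g1 \<or> path_image g - {x, y} \<subseteq> path_image g2"
proof -
  let ?C = "path_image g - {x, y}"
  have "closed (path_image g1)" and "closed (path_image g2)"
    using side1 side2 by (auto simp: side_def arc_imp_path intro: closed_path_image)
  moreover have "?C \<subseteq> path_image g1 \<union> path_image g2"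
    using assms frontier_eq by (auto simp: side_def)
  moreover have "path_image g1 \<inter> path_image g2 \<inter> ?C = {}"
    using sides_Int by auto
  ultimately have "\<not> (path_image g1 \<inter> ?C \<noteq> {} \<and> path_image g2 \<inter> ?C \<noteq> {})"
    using connected_side_Diff[OF assms] unfolding connected_closed by blast
  then show ?thesis
    using \<open>?C \<subseteq> path_image g1 \<union> path_image g2\<close> by blast
qed

lemma refl_line_side_Diff_subset_one_side:
  assumes "side S x y g"
  shows "refl_line x y ` (path_image g - {x, y}) \<subseteq> path_image g1
    \<or> refl_line x y ` (path_image g - {x, y}) \<subseteq> path_image g2"
  using side_Diff_subset_one_side[OF side_refl_line[OF assms]] x_ne_y
  by (simp add: path_image_compose refl_line_image_Diff_endpoints)

lemma refl_line_side1_subset_side2: "refl_line x y ` (path_image g1 - {x, y}) \<subseteq> path_image g2"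
proof (rule ccontr)
  assume "\<not> ?thesis"
  then have "refl_line x y ` (path_image g1 - {x, y}) \<subseteq> path_image g1"
    using refl_line_side_Diff_subset_one_side[OF side1] by blast
  then have g1_on_line: "\<And>z. z \<in> path_image g1 \<Longrightarrow> refl_line x y z = z"
    using side_fixed_by_refl_line[OF x_ne_y side1] by blast
  from refl_line_side_Diff_subset_one_side[OF side2] show False
  proof
    assume g2_to_g1: "refl_line x y ` (path_image g2 - {x, y}) \<subseteq> path_image g1"
    have z: "g2 (1/2) \<in> path_image g2 - {x, y}"
      using side_path_image_Diff[OF side2] by auto
    then have "refl_line x y (g2 (1/2)) \<in> path_image g1"
      using g2_to_g1 by blast
    then have "g2 (1/2) \<in> path_image g1"
      using g1_on_line x_ne_y by (metis refl_line_refl_line)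
    then show False
      using z sides_Int by blast
  next
    assume "refl_line x y ` (path_image g2 - {x, y}) \<subseteq> path_image g2"
    then have "\<And>z. z \<in> path_image g2 \<Longrightarrow> refl_line x y z = z"
      using side_fixed_by_refl_line[OF x_ne_y side2] by blast
    then have "midpoint x y \<in> path_image g1 \<inter> path_image g2"
      using g1_on_line side1 side2 x_ne_y
      by (auto simp: side_def arc_imp_path intro!: midpoint_in_path_image_on_line)
    then show False
      using sides_Int x_ne_y by auto
  qed
qed

lemma refl_line_in_side2_iff:
  "refl_line x y z \<in> path_image g2 - {x, y} \<longleftrightarrow> z \<in> path_image g1 - {x, y}"
proof
  assume "z \<in> path_image g1 - {x, y}"
  then show "refl_line x y z \<in> path_image g2 - {x, y}"
    using refl_line_side1_subset_side2 x_ne_y by auto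
next
  assume z: "refl_line x y z \<in> path_image g2 - {x, y}"
  then have "refl_line x y (refl_line x y z) \<in> path_image g1"
    using symmetric_adornment_sides.refl_line_side1_subset_side2[OF swap_sides] by blast
  then show "z \<in> path_image g1 - {x, y}"
    using z x_ne_y by auto
qed

lemma frontier_off_line:
  assumes "z \<in> frontier S - {x, y}"
  shows "Im (base_coord x y z) \<noteq> 0"
proof
  assume "Im (base_coord x y z) = 0"
  then have "refl_line x y z = z"
    using refl_line_eq_self_iff[OF x_ne_y] by simp
  then have "z \<in> path_image g1 \<inter> path_image g2"
    using assms refl_line_in_side2_iff[of z] frontier_eq by auto
  then show False
    using assms sides_Int by auto
qed

lemma side_same_half_plane:
  assumes g: "side S x y g" and "z \<in> path_image g - {x, y}" and "w \<in> path_image g - {x, y}"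
  shows "0 < Im (base_coord x y z) * Im (base_coord x y w)"
proof (rule connected_nonzero_same_sign[OF connected_side_Diff[OF g] _ _ assms(2,3)])
  show "continuous_on (path_image g - {x, y}) (\<lambda>z. Im (base_coord x y z))"
    using x_ne_y unfolding base_coord_def by (intro continuous_intros) auto
  show "Im (base_coord x y z) \<noteq> 0" if "z \<in> path_image g - {x, y}" for z
    using that g by (intro frontier_off_line) (auto simp: side_def)
qed

text \<open>The only other point with the same distances is the mirror image, which lies in the
  opposite half-plane.\<close>
lemma side_eq_if_dists_eq:
  assumes g: "side S x y g" and "z \<in> path_image g" and f: "f \<in> path_image g - {x, y}"
    and "dist z x = dist f x" and "dist z y = dist f y"
  shows "z = f"
proof (rule ccontr)
  assume "z \<noteq> f"
  then have z: "z = refl_line x y f"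
    using eq_or_refl_line_if_dists_eq[OF x_ne_y] assms(4,5) by blast
  then have "z \<notin> {x, y}"
    using f x_ne_y by auto
  then have "0 < Im (base_coord x y z) * Im (base_coord x y f)"
    using side_same_half_plane[OF g _ f] assms(2) by blast
  then show False
    using z x_ne_y by (simp add: base_coord_refl_line mult_le_0_iff)
qed

lemma side_dists_differ_before:
  assumes g: "side S x y g" and t: "t \<in> {0<..<1}" and v: "v \<in> {0..<t}"
  shows "dist (g v) x \<noteq> dist (g t) x \<or> dist (g v) y \<noteq> dist (g t) y"
proof -
  have "g t \<in> path_image g - {x, y}"
    using side_path_image_Diff[OF g] t by auto
  moreover have "g v \<in> path_image g"
    using v t by (auto simp: path_image_def)
  moreover have "g v \<noteq> g t"
    using v t g by (auto simp: side_def arc_def dest: inj_onD)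
  ultimately show ?thesis
    using side_eq_if_dists_eq[OF g] by blast
qed

lemma lens_closed_side_monotone:
  assumes lens: "lens_closed S x y" and g: "side S x y g"
    and t: "t \<in> {0<..<1}" and u: "u \<in> {0..<t}"
  shows "dist (g u) x \<le> dist (g t) x \<and> dist (g t) y \<le> dist (g u) y"
proof -
  have g_frontier: "g v \<in> frontier S" if "v \<in> {0..1}" for v
    using g that by (auto simp: side_def path_image_def)
  define f where "f = g t"
  have "f \<in> frontier S"
    using g_frontier t by (simp add: f_def)
  define NW where "NW = {w. dist w x \<le> dist f x \<and> dist f y \<le> dist w y}"
  define SE where "SE = {w. dist f x \<le> dist w x \<and> dist w y \<le> dist f y}"
  let ?C = "g ` {0..<t}"
  have "connected ?C"
    using g t by (auto simp: side_def arc_def path_def intro!: connected_continuous_image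
        elim: continuous_on_subset)
  moreover have "NW \<inter> SE \<inter> ?C = {}"
    using side_dists_differ_before[OF g t] unfolding NW_def SE_def f_def by fastforce
  moreover have "?C \<subseteq> NW \<union> SE"
    using lens_closed_frontier_comparable[OF lens compact_imp_closed[OF compact] \<open>f \<in> frontier S\<close>]
      g_frontier t
    unfolding NW_def SE_def by fastforce
  moreover have "closed NW" and "closed SE"
    unfolding NW_def SE_def by (intro closed_Collect_conj closed_Collect_le continuous_intros)+
  ultimately have "NW \<inter> ?C = {} \<or> SE \<inter> ?C = {}"
    by (rule connected_closedD)
  moreover have "x \<in> NW \<inter> ?C"
  proof -
    have "dist f y \<le> dist x y"
      using lens_closed_dist_le[OF lens x_in_frontier] \<open>f \<in> frontier S\<close> frontier_subset by blast
    moreover have "x = g 0"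
      using g by (simp add: side_def pathstart_def)
    ultimately show ?thesis
      using t by (auto simp: NW_def)
  qed
  ultimately have "g u \<in> NW"
    using u \<open>?C \<subseteq> NW \<union> SE\<close> by blast
  then show ?thesis
    unfolding NW_def f_def by simp
qed

lemma slender_if_lens_closed:
  assumes lens: "lens_closed S x y"
  shows "slender S x y"
  unfolding slender_def
proof (intro allI impI ballI)
  fix g and s t :: real
  assume g: "side S x y g" and s: "s \<in> {0..1}" and t: "t \<in> {0..1}" and "s \<le> t"
  have "g s \<in> S"
    using g s frontier_subset unfolding side_def path_image_def by blast
  consider "s = t" | "t = 1" | "t \<in> {0<..<1}" and "s \<in> {0..<t}"
    using s t \<open>s \<le> t\<close> by fastforce
  then show "dist (g s) x \<le> dist (g t) x \<and> dist (g t) y \<le> dist (g s) y"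
  proof cases
    case 2
    then have "g t = y"
      using g by (simp add: side_def pathfinish_def)
    moreover have "dist (g s) x \<le> dist y x"
      using lens_closed_commute[THEN iffD1, OF lens] y_in_frontier \<open>g s \<in> S\<close>
      by (rule lens_closed_dist_le)
    ultimately show ?thesis
      by simp
  next
    case 3
    then show ?thesis
      by (rule lens_closed_side_monotone[OF lens g])
  qed simp
qed

lemma slender_frontier_undominated:
  assumes "slender S x y" and "z \<in> frontier S" and "f \<in> path_image g1"
  shows "\<not> (dist z x < dist f x \<and> dist z y < dist f y)"
proof (cases "z \<in> path_image g1")
  case True
  then show ?thesis
    using slender_side_undominated[OF assms(1) side1 _ assms(3)] by blast
next
  case False
  then have "refl_line x y z \<in> path_image g1"
    using assms(2) frontier_eq sides_Int refl_line_in_side2_iff[of "refl_line x y z"] x_ne_y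
    by auto
  then show ?thesis
    using slender_side_undominated[OF assms(1) side1 _ assms(3)] x_ne_y by fastforce
qed

lemma slender_lens_subset_side1:
  assumes "slender S x y" and f: "f \<in> path_image g1 - {x, y}"
  shows "cball x (dist f x) \<inter> cball y (dist f y) \<subseteq> S"
proof (rule closed_lens_subset_if_open_lens_subset)
  let ?Q = "ball x (dist f x) \<inter> ball y (dist f y)"
  show "closed S"
    using compact by (rule compact_imp_closed)
  have "Im (base_coord x y f) \<noteq> 0"
    using f frontier_eq by (intro frontier_off_line) auto
  then have "dist x y < dist f x + dist f y"
    using dist_lt_dist_add_dist_off_line[OF x_ne_y] by blast
  then have "closed_segment x y \<inter> ?Q \<noteq> {}"
    using closed_segment_meets_lens[of "dist f x" "dist f y" x y] f by (auto simp: Int_assoc)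
  then have "?Q \<inter> S \<noteq> {}"
    using segment_subset by blast
  then show "?Q \<noteq> {}"
    by blast
  show "?Q \<subseteq> S"
  proof (rule ccontr)
    assume "\<not> ?Q \<subseteq> S"
    then have "?Q \<inter> frontier S \<noteq> {}"
      using connected_Int_frontier[of ?Q S] \<open>?Q \<inter> S \<noteq> {}\<close>
      by (auto intro: convex_connected convex_Int)
    then show False
      using slender_frontier_undominated[OF assms(1)] f by (auto simp: dist_commute)
  qed
qed

lemma slender_lens_subset:
  assumes "slender S x y" and f: "f \<in> frontier S"
  shows "cball x (dist f x) \<inter> cball y (dist f y) \<subseteq> S"
proof -
  consider "f \<in> {x, y}" | "f \<in> path_image g1 - {x, y}" | "refl_line x y f \<in> path_image g1 - {x, y}"
    using f frontier_eq refl_line_in_side2_iff[of "refl_line x y f"] x_ne_y by auto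
  then show ?thesis
  proof cases
    case 1
    then show ?thesis
      using x_in_frontier y_in_frontier frontier_subset by auto
  next
    case 2
    then show ?thesis
      using slender_lens_subset_side1[OF assms(1)] by blast
  next
    case 3
    then show ?thesis
      using slender_lens_subset_side1[OF assms(1) 3] x_ne_y by simp
  qed
qed

lemma lens_closed_if_slender:
  assumes "slender S x y"
  shows "lens_closed S x y"
  unfolding lens_closed_def
proof (intro ballI allI impI)
  fix z w
  assume "z \<in> S" and "dist w x \<le> dist z x" and "dist w y \<le> dist z y"
  moreover obtain f where "f \<in> frontier S" and "dist z x \<le> dist f x" and "dist z y \<le> dist f y"
    using frontier_point_dominating compact_imp_bounded[OF compact] \<open>z \<in> S\<close> x_ne_y by metis
  ultimately show "w \<in> S"
    using slender_lens_subset[OF assms] by (fastforce simp: dist_commute)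
qed

lemma slender_iff_lens_closed: "slender S x y \<longleftrightarrow> lens_closed S x y"
  using slender_if_lens_closed lens_closed_if_slender by blast

end

theorem mainTheorem3:
  fixes S :: "complex set" and x y :: complex
  assumes "symmetric_adornment S x y"
  shows "slender S x y \<longleftrightarrow>
           (\<exists>R :: (real \<times> real) set. S = (\<Union>(r, s)\<in>R. cball x r \<inter> cball y s))"
proof -
  obtain g1 g2 where "symmetric_adornment_sides S x y g1 g2"
    using assms by (auto simp: symmetric_adornment_def adornment_def symmetric_adornment_sides_def)
  then show ?thesis
    by (simp add: symmetric_adornment_sides.slender_iff_lens_closed union_of_lenses_iff_lens_closed)
qed

end
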